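(* Let $a$ and $b$ be relatively prime integers with $1\le a<b$. Then there exist a positive integer $n$ and a permutation $\pi=(\pi_1,\ldots,\pi_n)$ of $\{1,\ldots,n\}$ such that $\{\pi_{i+1}-\pi_i : 1\le i\le n-1\}=\{a,-b\}$; that is, $(a,-b)$ is a $D$-pair.
   Context: A pair $(p,q)$ of distinct integers is called a $D$-pair if for some $n\ge 1$ there is a permutation $\pi$ of $\{1,\ldots,n\}$ whose set of discrete derivative values $\{\pi_{i+1}-\pi_i: 1\le i\le n-1\}$ equals $\{p,q\}$. *)

theory Defs
  imports Main
begin

definition derivative_set :: "nat \<Rightarrow> (nat \<Rightarrow> int) \<Rightarrow> int set" where
  "derivative_set n \<pi> = {\<pi> (i + 1) - \<pi> i | i. 1 \<le> i \<and> i + 1 \<le> n}"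

definition D_pair :: "int \<Rightarrow> int \<Rightarrow> bool" where
  "D_pair p q \<longleftrightarrow> p \<noteq> q \<and>
     (\<exists>n::nat. n \<ge> 1 \<and> (\<exists>\<pi> :: nat \<Rightarrow> int.
        bij_betw \<pi> {1..n} {1..int n} \<and> derivative_set n \<pi> = {p, q}))"

end

theory Submission
  imports Defs
begin

text \<open>Put \<open>n = a + b\<close> and \<open>\<pi> i = (i a mod n) + 1\<close> for \<open>1 \<le> i \<le> n\<close>. Since \<open>a\<close> is a unit
  modulo \<open>n\<close>, \<open>\<pi>\<close> is a permutation of \<open>{1..n}\<close>. Each step adds \<open>a\<close> to the residue, so the
  difference \<open>\<pi> (i + 1) - \<pi> i\<close> is \<open>a\<close>, or \<open>a - n = -b\<close> when the residue wraps around.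
  Both values occur: at the index with residue \<open>1\<close> and at the one with residue \<open>n - 1\<close>,
  neither of which is the last index \<open>n\<close> (residue \<open>0\<close>).\<close>

lemma mod_add_diff_mod_cases:
  fixes r a n :: int
  assumes "0 \<le> a" "a < n"
  shows "(r + a) mod n - r mod n \<in> {a, a - n}"
proof -
  have r: "0 \<le> r mod n" "r mod n < n" using assms by simp_all
  show ?thesis
  proof (cases "r mod n + a < n")
    case True
    with r assms have "(r mod n + a) mod n = r mod n + a"
      by simp
    then show ?thesis by (simp add: mod_add_left_eq)
  next
    case False
    have "(r mod n + a) mod n = (r mod n + a - n) mod n"
      by (metis diff_add_cancel mod_add_self2)
    also have "\<dots> = r mod n + a - n"
      using r assms False by (intro mod_pos_pos_trivial) linarith+
    finally show ?thesis by (simp add: mod_add_left_eq)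
  qed
qed

lemma inj_on_mult_mod:
  fixes a n :: int
  assumes "coprime a n"
  shows "inj_on (\<lambda>i::nat. (int i * a) mod n) {1..nat n}"
proof
  fix i j assume i: "i \<in> {1..nat n}" and j: "j \<in> {1..nat n}"
    and "(int i * a) mod n = (int j * a) mod n"
  then have "n dvd (int i - int j) * a"
    by (simp add: mod_eq_dvd_iff left_diff_distrib)
  with assms have "n dvd int i - int j"
    by (simp add: coprime_commute coprime_dvd_mult_left_iff)
  moreover have "\<bar>int i - int j\<bar> < n" using i j by auto
  ultimately have "int i - int j = 0"
    by (metis abs_ge_self dvd_imp_le_int linorder_not_less order_le_less_trans)
  then show "i = j" by simp
qed

lemma bij_betw_mult_mod:
  fixes a n :: int
  assumes "coprime a n" "0 < n"
  shows "bij_betw (\<lambda>i::nat. (int i * a) mod n) {1..nat n} {0..<n}"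
proof -
  let ?f = "\<lambda>i::nat. (int i * a) mod n"
  have "?f ` {1..nat n} \<subseteq> {0..<n}" using assms(2) by auto
  moreover have "card (?f ` {1..nat n}) = card {0..<n}"
    using card_image[OF inj_on_mult_mod[OF assms(1)]] assms(2) by simp
  ultimately show ?thesis
    using inj_on_mult_mod[OF assms(1)] by (simp add: bij_betw_def card_subset_eq)
qed

lemma bij_betw_mult_mod_plus_one:
  fixes a n :: int
  assumes "coprime a n" "0 < n"
  shows "bij_betw (\<lambda>i::nat. (int i * a) mod n + 1) {1..nat n} {1..n}"
proof -
  have "bij_betw (\<lambda>r. r + 1) {0..<n} {1..n}"
    by (rule bij_betw_imageI) (auto simp: image_iff intro!: bexI[where x = "_ - 1"])
  then show ?thesis
    using bij_betw_trans[OF bij_betw_mult_mod[OF assms]] by (simp add: comp_def)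
qed

lemma exists_index_mult_mod_eq:
  fixes a n r :: int
  assumes "coprime a n" "0 < r" "r < n"
  obtains i :: nat where "1 \<le> i" "i + 1 \<le> nat n" "(int i * a) mod n = r"
proof -
  from assms have "r \<in> (\<lambda>i::nat. (int i * a) mod n) ` {1..nat n}"
    using bij_betw_mult_mod[OF assms(1)] by (simp add: bij_betw_def)
  then obtain i where "i \<in> {1..nat n}" "(int i * a) mod n = r" by blast
  moreover have "i \<noteq> nat n"
    using \<open>(int i * a) mod n = r\<close> assms(2,3) by auto
  ultimately show ?thesis by (intro that) auto
qed

lemma derivative_set_mult_mod:
  fixes a n :: int
  assumes "coprime a n" "1 \<le> a" "a + 1 < n"
  shows "derivative_set (nat n) (\<lambda>i. (int i * a) mod n + 1) = {a, a - n}"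
    (is "derivative_set _ ?\<pi> = _")
proof -
  have step: "?\<pi> (i + 1) - ?\<pi> i = (int i * a + a) mod n - (int i * a) mod n" for i
    by (simp add: algebra_simps)
  have "derivative_set (nat n) ?\<pi> \<subseteq> {a, a - n}"
    unfolding derivative_set_def step
    using mod_add_diff_mod_cases[of a n] assms(2,3) by auto
  moreover have in_derivative_set: "d \<in> derivative_set (nat n) ?\<pi>"
    if "(r + a) mod n - r = d" "0 < r" "r < n" for r d
  proof -
    obtain i where i: "1 \<le> i" "i + 1 \<le> nat n" "(int i * a) mod n = r"
      using exists_index_mult_mod_eq[OF assms(1) \<open>0 < r\<close> \<open>r < n\<close>] .
    have "(int i * a + a) mod n = (r + a) mod n"
      using i(3) by (metis mod_add_left_eq)
    then have "?\<pi> (i + 1) - ?\<pi> i = d"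
      using step[of i] i(3) that(1) by linarith
    with i show ?thesis
      unfolding derivative_set_def by blast
  qed
  moreover have "a \<in> derivative_set (nat n) ?\<pi>"
    using assms(2,3) by (intro in_derivative_set[of 1]) (simp_all add: mod_pos_pos_trivial)
  moreover have "a - n \<in> derivative_set (nat n) ?\<pi>"
  proof (rule in_derivative_set[of "n - 1"])
    have "(n - 1 + a) mod n = (a - 1) mod n"
      by (metis add.commute diff_add_eq mod_add_self2)
    also have "\<dots> = a - 1"
      using assms(2,3) by (intro mod_pos_pos_trivial) linarith+
    finally show "(n - 1 + a) mod n - (n - 1) = a - n" by simp
  qed (use assms(2,3) in auto)
  ultimately show ?thesis by blast
qed

theorem theorem2p5:
  fixes a b :: int
  assumes "coprime a b" and "1 \<le> a" and "a < b"
  shows "D_pair a (-b)"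
proof -
  define n where "n = a + b"
  have "coprime a n"
    using assms(1) unfolding n_def by (simp add: coprime_iff_gcd_eq_1)
  moreover have "1 \<le> a" "a + 1 < n" "0 < n" "a - n = -b"
    using assms(2,3) unfolding n_def by auto
  ultimately have
    "bij_betw (\<lambda>i::nat. (int i * a) mod n + 1) {1..nat n} {1..int (nat n)}"
    "derivative_set (nat n) (\<lambda>i. (int i * a) mod n + 1) = {a, -b}"
    using bij_betw_mult_mod_plus_one derivative_set_mult_mod by auto
  moreover have "a \<noteq> -b" "1 \<le> nat n"
    using assms(2,3) \<open>0 < n\<close> by auto
  ultimately show ?thesis
    unfolding D_pair_def by blast
qed

end
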